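(* For every finite set of formulas $\Gamma\cup\{\varphi\}\subseteq For$: $\Gamma \vdash_{\bf Tm} \varphi$ if and only if there exist sets of formulas $\Upsilon,\Upsilon'$ such that $\Gamma\cup\{\circ \delta \ : \ \delta \in \Upsilon\}\cup\{\circ' \gamma \ : \ \gamma \in \Upsilon'\} \vdash_{\bf Km} \varphi$, where $\circ\delta:=\Box\delta\to\Diamond\delta$ and $\circ'\gamma:=(\Box\gamma\to\gamma)\wedge(\Box\neg\gamma\to\neg\gamma)$.
   Context: Formulas are built from a denumerable set of propositional variables by the unary connectives $\neg$, $\Box$ and the binary connective $\to$; $For$ is the set of all formulas. Abbreviations: $\Diamond\alpha:=\neg\Box\neg\alpha$, $\alpha\vee\beta:=\neg\alpha\to\beta$, $\alpha\wedge\beta:=\neg(\alpha\to\neg\beta)$. All Hilbert calculi below have as axioms all instances (over $For$) of the axiom schemas of a standard Hilbert calculus for classical propositional logic in the signature $\{\neg,\to\}$, plus the listed modal schemas, with modus ponens as the only rule; $\Gamma\vdash_{\bf L}\alpha$ means there is a derivation of $\alpha$ from $\Gamma$ in ${\bf L}$. ${\bf Km}$: (K') $\Diamond\alpha\to(\Box(\alpha\to\beta)\to(\Box\alpha\to\Box\beta))$; (K1') $\Diamond\neg\beta\to(\Box(\alpha\to\beta)\to(\Diamond\alpha\to\Diamond\beta))$; (K2') $\Diamond\alpha\to(\Diamond(\alpha\to\beta)\to(\Box\alpha\to\Diamond\beta))$; (M3') $(\Diamond\alpha\vee\Diamond\neg\alpha)\to(\Diamond\beta\to\Diamond(\alpha\to\beta))$;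 (M4') $\Diamond\neg\beta\to(\Diamond\neg\alpha\to\Diamond(\alpha\to\beta))$; (I1) $(\Box\alpha\wedge\Box\neg\alpha)\to(\Box(\alpha\to\beta)\wedge\Box\neg(\alpha\to\beta))$; (I2) $(\Box\beta\wedge\Box\neg\beta)\to(\Box(\alpha\to\beta)\wedge\Box\neg(\alpha\to\beta))$; (M1) $\neg\Diamond\alpha\to\Box(\alpha\to\beta)$; (M2) $\Box\beta\to\Box(\alpha\to\beta)$; (DN1) $\Box\alpha\to\Box\neg\neg\alpha$; (DN2) $\Box\neg\neg\alpha\to\Box\alpha$. ${\bf Tm}$: (K) $\Box(\alpha\to\beta)\to(\Box\alpha\to\Box\beta)$; (K1) $\Box(\alpha\to\beta)\to(\Diamond\alpha\to\Diamond\beta)$; (K2) $\Diamond(\alpha\to\beta)\to(\Box\alpha\to\Diamond\beta)$; (M1); (M2); (M3) $\Diamond\beta\to\Diamond(\alpha\to\beta)$; (M4) $\Diamond\neg\alpha\to\Diamond(\alpha\to\beta)$; (DN1); (DN2); (T) $\Box\alpha\to\alpha$. *)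

theory Defs
  imports Main
begin

datatype fm = PVar nat | Neg fm | Box fm | Imp fm fm

definition Dia :: "fm \<Rightarrow> fm" where "Dia a = Neg (Box (Neg a))"
definition Or :: "fm \<Rightarrow> fm \<Rightarrow> fm" where "Or a b = Imp (Neg a) b"
definition And :: "fm \<Rightarrow> fm \<Rightarrow> fm" where "And a b = Neg (Imp a (Neg b))"

text \<open>Classical propositional axioms (Mendelson's system in signature neg, imp).\<close>
inductive cpl_ax :: "fm \<Rightarrow> bool" where
  A1: "cpl_ax (Imp a (Imp b a))"
| A2: "cpl_ax (Imp (Imp a (Imp b c)) (Imp (Imp a b) (Imp a c)))"
| A3: "cpl_ax (Imp (Imp (Neg b) (Neg a)) (Imp (Imp (Neg b) a) b))"

inductive Km_ax :: "fm \<Rightarrow> bool" where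
  CPL: "cpl_ax a \<Longrightarrow> Km_ax a"
| K': "Km_ax (Imp (Dia a) (Imp (Box (Imp a b)) (Imp (Box a) (Box b))))"
| K1': "Km_ax (Imp (Dia (Neg b)) (Imp (Box (Imp a b)) (Imp (Dia a) (Dia b))))"
| K2': "Km_ax (Imp (Dia a) (Imp (Dia (Imp a b)) (Imp (Box a) (Dia b))))"
| M3': "Km_ax (Imp (Or (Dia a) (Dia (Neg a))) (Imp (Dia b) (Dia (Imp a b))))"
| M4': "Km_ax (Imp (Dia (Neg b)) (Imp (Dia (Neg a)) (Dia (Imp a b))))"
| I1: "Km_ax (Imp (And (Box a) (Box (Neg a))) (And (Box (Imp a b)) (Box (Neg (Imp a b)))))"
| I2: "Km_ax (Imp (And (Box b) (Box (Neg b))) (And (Box (Imp a b)) (Box (Neg (Imp a b)))))"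
| M1: "Km_ax (Imp (Neg (Dia a)) (Box (Imp a b)))"
| M2: "Km_ax (Imp (Box b) (Box (Imp a b)))"
| DN1: "Km_ax (Imp (Box a) (Box (Neg (Neg a))))"
| DN2: "Km_ax (Imp (Box (Neg (Neg a))) (Box a))"

inductive Tm_ax :: "fm \<Rightarrow> bool" where
  CPL: "cpl_ax a \<Longrightarrow> Tm_ax a"
| K: "Tm_ax (Imp (Box (Imp a b)) (Imp (Box a) (Box b)))"
| K1: "Tm_ax (Imp (Box (Imp a b)) (Imp (Dia a) (Dia b)))"
| K2: "Tm_ax (Imp (Dia (Imp a b)) (Imp (Box a) (Dia b)))"
| M1: "Tm_ax (Imp (Neg (Dia a)) (Box (Imp a b)))"
| M2: "Tm_ax (Imp (Box b) (Box (Imp a b)))"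
| M3: "Tm_ax (Imp (Dia b) (Dia (Imp a b)))"
| M4: "Tm_ax (Imp (Dia (Neg a)) (Dia (Imp a b)))"
| DN1: "Tm_ax (Imp (Box a) (Box (Neg (Neg a))))"
| DN2: "Tm_ax (Imp (Box (Neg (Neg a))) (Box a))"
| T: "Tm_ax (Imp (Box a) a)"

inductive derivable :: "(fm \<Rightarrow> bool) \<Rightarrow> fm set \<Rightarrow> fm \<Rightarrow> bool" for Ax where
  prem: "a \<in> G \<Longrightarrow> derivable Ax G a"
| ax: "Ax a \<Longrightarrow> derivable Ax G a"
| mp: "derivable Ax G a \<Longrightarrow> derivable Ax G (Imp a b) \<Longrightarrow> derivable Ax G b"

definition circ :: "fm \<Rightarrow> fm" where "circ d = Imp (Box d) (Dia d)"
definition circ' :: "fm \<Rightarrow> fm" where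
  "circ' g = And (Imp (Box g) g) (Imp (Box (Neg g)) (Neg g))"

end

theory Submission
  imports Defs
begin

text \<open>Both calculi contain classical propositional logic, so each can derive anything that
follows propositionally, with variables and boxed formulas as atoms, from formulas it derives.
Every instance of a Tm axiom then follows propositionally from Km axioms together with instances
of circ and circ', and conversely every Km axiom, as well as every instance of circ and circ',
follows propositionally from Tm axioms (mostly using T).  Replacing premises and axioms
of a derivation by derivations of them gives both directions, with U = U' = all formulas for
the forward one.\<close>

lemma derivable_transfer:
  assumes "derivable Ax H a"
    and "\<And>b. b \<in> H \<Longrightarrow> derivable Ax' G b"
    and "\<And>b. Ax b \<Longrightarrow> derivable Ax' G b"
  shows "derivable Ax' G a"
  using assms by (induction rule: derivable.induct) (auto intro: derivable.mp)

lemma derivable_mono: "derivable Ax G a \<Longrightarrow> G \<subseteq> H \<Longrightarrow> derivable Ax H a"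
  by (erule derivable_transfer) (auto intro: derivable.intros)

fun prop_eval :: "(fm \<Rightarrow> bool) \<Rightarrow> fm \<Rightarrow> bool" where
  "prop_eval v (PVar n) = v (PVar n)"
| "prop_eval v (Box a) = v (Box a)"
| "prop_eval v (Neg a) = (\<not> prop_eval v a)"
| "prop_eval v (Imp a b) = (prop_eval v a \<longrightarrow> prop_eval v b)"

fun prop_atoms :: "fm \<Rightarrow> fm set" where
  "prop_atoms (PVar n) = {PVar n}"
| "prop_atoms (Box a) = {Box a}"
| "prop_atoms (Neg a) = prop_atoms a"
| "prop_atoms (Imp a b) = prop_atoms a \<union> prop_atoms b"

lemma finite_prop_atoms: "finite (prop_atoms a)"
  by (induction a) auto

definition literal :: "(fm \<Rightarrow> bool) \<Rightarrow> fm \<Rightarrow> fm" where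
  "literal v p = (if v p then p else Neg p)"

lemma literal_fun_upd_image:
  "x \<notin> S \<Longrightarrow> literal (v(x := w)) ` S = literal v ` S"
  by (auto simp: literal_def)

locale classical_calculus =
  fixes Ax :: "fm \<Rightarrow> bool"
  assumes cpl_ax_Ax: "cpl_ax a \<Longrightarrow> Ax a"
begin

lemma derivable_A1: "derivable Ax G (Imp a (Imp b a))"
  by (blast intro: derivable.ax cpl_ax_Ax cpl_ax.intros)

lemma derivable_A2: "derivable Ax G (Imp (Imp a (Imp b c)) (Imp (Imp a b) (Imp a c)))"
  by (blast intro: derivable.ax cpl_ax_Ax cpl_ax.intros)

lemma derivable_A3: "derivable Ax G (Imp (Imp (Neg b) (Neg a)) (Imp (Imp (Neg b) a) b))"
  by (blast intro: derivable.ax cpl_ax_Ax cpl_ax.intros)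

lemma derivable_imp_refl: "derivable Ax G (Imp a a)"
  by (meson derivable.mp derivable_A1 derivable_A2)

lemma deduction: "derivable Ax (insert a G) b \<Longrightarrow> derivable Ax G (Imp a b)"
proof (induction "insert a G" b rule: derivable.induct)
  case (prem b)
  then show ?case
    by (metis derivable.mp derivable.prem derivable_A1 derivable_imp_refl insert_iff)
next
  case (ax b)
  then show ?case by (meson derivable.ax derivable.mp derivable_A1)
next
  case (mp b c)
  then show ?case by (meson derivable.mp derivable_A2)
qed

lemma derivable_ex_falso: "derivable Ax G (Imp (Neg a) (Imp a b))"
proof -
  have "derivable Ax (insert a (insert (Neg a) G)) b"
    by (meson derivable.mp derivable.prem derivable_A1 derivable_A3 insertI1 insertI2)
  then show ?thesis by (intro deduction)
qed

lemma derivable_double_neg_elim: "derivable Ax G (Imp (Neg (Neg b)) b)"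
proof -
  have "derivable Ax (insert (Neg (Neg b)) G) b"
    by (meson derivable.mp derivable.prem derivable_A1 derivable_A3 derivable_imp_refl insertI1)
  then show ?thesis by (intro deduction)
qed

lemma derivable_double_neg_intro: "derivable Ax G (Imp b (Neg (Neg b)))"
proof -
  have "derivable Ax (insert b G) (Neg (Neg b))"
    by (meson derivable.mp derivable.prem derivable_A1 derivable_A3 derivable_double_neg_elim
        insertI1)
  then show ?thesis by (intro deduction)
qed

lemma derivable_contrapos_rev: "derivable Ax G (Imp (Imp (Neg b) (Neg a)) (Imp a b))"
proof -
  have "derivable Ax (insert a (insert (Imp (Neg b) (Neg a)) G)) b"
    by (meson derivable.mp derivable.prem derivable_A1 derivable_A3 insertI1 insertI2)
  then show ?thesis by (intro deduction)
qed

lemma derivable_contrapos: "derivable Ax G (Imp (Imp a b) (Imp (Neg b) (Neg a)))"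
proof -
  let ?G = "insert (Imp a b) G"
  have "derivable Ax (insert (Neg (Neg a)) ?G) (Neg (Neg b))"
    by (meson derivable.mp derivable.prem derivable_double_neg_elim derivable_double_neg_intro
        insertI1 insertI2)
  then have "derivable Ax ?G (Imp (Neg (Neg a)) (Neg (Neg b)))"
    by (rule deduction)
  then have "derivable Ax ?G (Imp (Neg b) (Neg a))"
    by (meson derivable.mp derivable_contrapos_rev)
  then show ?thesis by (rule deduction)
qed

lemma derivable_neg_imp_intro: "derivable Ax G (Imp a (Imp (Neg b) (Neg (Imp a b))))"
proof -
  have "derivable Ax (insert (Imp a b) (insert a G)) b"
    by (meson derivable.mp derivable.prem insertI1 insertI2)
  then have "derivable Ax (insert a G) (Imp (Imp a b) b)"
    by (rule deduction)
  then have "derivable Ax (insert a G) (Imp (Neg b) (Neg (Imp a b)))"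
    by (meson derivable.mp derivable_contrapos)
  then show ?thesis by (rule deduction)
qed

lemma derivable_by_cases: "derivable Ax G (Imp (Imp a b) (Imp (Imp (Neg a) b) b))"
proof -
  let ?G = "insert (Imp (Neg a) b) (insert (Imp a b) G)"
  have "derivable Ax ?G (Imp (Neg b) (Neg a))" "derivable Ax ?G (Imp (Neg b) (Neg (Neg a)))"
    by (meson derivable.mp derivable.prem derivable_contrapos insertI1 insertI2)+
  then have "derivable Ax ?G b"
    by (meson derivable.mp derivable_A3)
  then show ?thesis by (intro deduction)
qed

lemma derivable_signed_prop_eval:
  assumes "prop_atoms a \<subseteq> S"
  shows "derivable Ax (literal v ` S) (if prop_eval v a then a else Neg a)"
  using assms
proof (induction a)
  case (PVar n)
  then show ?case by (auto simp: literal_def intro: derivable.prem)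
next
  case (Box a)
  then show ?case by (auto simp: literal_def intro: derivable.prem)
next
  case (Neg a)
  then show ?case
    by (auto intro: derivable.mp derivable_double_neg_intro)
next
  case (Imp a b)
  then have IH: "derivable Ax (literal v ` S) (if prop_eval v a then a else Neg a)"
      "derivable Ax (literal v ` S) (if prop_eval v b then b else Neg b)"
    by auto
  consider "prop_eval v b" | "prop_eval v a" "\<not> prop_eval v b" | "\<not> prop_eval v a"
    by blast
  then show ?case
  proof cases
    case 1
    then show ?thesis using IH by (auto intro: derivable.mp derivable_A1)
  next
    case 2
    with IH have "derivable Ax (literal v ` S) a" "derivable Ax (literal v ` S) (Neg b)"
      by simp_all
    with 2 show ?thesis
      by (simp add: derivable.mp[OF _ derivable.mp[OF _ derivable_neg_imp_intro]])
  next
    case 3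
    then show ?thesis using IH by (auto intro: derivable.mp derivable_ex_falso)
  qed
qed

lemma derivable_of_derivable_from_literals:
  assumes "finite S" and "\<And>v. derivable Ax (G \<union> literal v ` S) a"
  shows "derivable Ax G a"
  using assms
proof (induction S rule: finite_induct)
  case empty
  then show ?case by simp
next
  case (insert x S)
  have "derivable Ax (G \<union> literal v ` S) a" for v
  proof -
    have "derivable Ax (insert (literal (v(x := w)) x) (G \<union> literal v ` S)) a" for w
      using insert.prems[of "v(x := w)"]
      by (simp only: image_insert Un_insert_right literal_fun_upd_image[OF insert.hyps(2)])
    from this[of True] this[of False]
    have "derivable Ax (G \<union> literal v ` S) (Imp x a)"
      "derivable Ax (G \<union> literal v ` S) (Imp (Neg x) a)"
      by (simp_all add: literal_def deduction)
    then show ?thesis by (meson derivable.mp derivable_by_cases)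
  qed
  then show ?case by (rule insert.IH)
qed

text \<open>Kalmar's argument: every valuation of the finitely many atoms involved either refutes a
hypothesis or verifies the conclusion.\<close>

lemma derivable_prop_consequence:
  assumes "\<And>h. h \<in> H \<Longrightarrow> derivable Ax G h" and "finite H"
    and "\<And>v. \<forall>h\<in>H. prop_eval v h \<Longrightarrow> prop_eval v a"
  shows "derivable Ax G a"
proof (rule derivable_of_derivable_from_literals)
  let ?S = "prop_atoms a \<union> \<Union> (prop_atoms ` H)"
  show "finite ?S" using assms(2) by (simp add: finite_prop_atoms)
  fix v
  have signed: "derivable Ax (G \<union> literal v ` ?S) (if prop_eval v b then b else Neg b)"
    if "prop_atoms b \<subseteq> ?S" for b
    by (rule derivable_mono[OF derivable_signed_prop_eval[OF that]]) blast
  show "derivable Ax (G \<union> literal v ` ?S) a"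
  proof (cases "\<forall>h\<in>H. prop_eval v h")
    case True
    then show ?thesis using signed[of a] assms(3) by auto
  next
    case False
    then obtain h where h: "h \<in> H" "\<not> prop_eval v h" by blast
    have "derivable Ax (G \<union> literal v ` ?S) h"
      using derivable_mono[OF assms(1)[OF h(1)]] by blast
    moreover have "derivable Ax (G \<union> literal v ` ?S) (Neg h)"
      using signed[of h] h by auto
    ultimately show ?thesis by (meson derivable.mp derivable_ex_falso)
  qed
qed

end

interpretation Km: classical_calculus Km_ax
  by unfold_locales (rule Km_ax.CPL)

interpretation Tm: classical_calculus Tm_ax
  by unfold_locales (rule Tm_ax.CPL)

lemmas modal_defs = Dia_def Or_def And_def circ_def circ'_def

lemma Tm_ax_derivable_Km_circ:
  assumes "range circ \<union> range circ' \<subseteq> G" and "Tm_ax a"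
  shows "derivable Km_ax G a"
proof -
  have ax: "\<And>b. Km_ax b \<Longrightarrow> derivable Km_ax G b"
    by (rule derivable.ax)
  have circ: "\<And>d. derivable Km_ax G (circ d)" and circ': "\<And>d. derivable Km_ax G (circ' d)"
    using assms(1) by (auto intro!: derivable.prem)
  from assms(2) show ?thesis
  proof cases
    \<comment> \<open>blast instantiates the schematic hypothesis set from the chained facts before auto
      gets a chance to instantiate it trivially\<close>
    case (K a b)
    then show ?thesis using ax[OF Km_ax.K'[of a b]] circ[of a]
      by - (rule Km.derivable_prop_consequence[of "{_, _}"], blast, auto simp: modal_defs)
  next
    case (K1 a b)
    then show ?thesis using ax[OF Km_ax.K1'[of b a]] ax[OF Km_ax.DN2[of b]] circ[of b]
      by - (rule Km.derivable_prop_consequence[of "{_, _, _}"], blast, auto simp: modal_defs)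
  next
    case (K2 a b)
    then show ?thesis using ax[OF Km_ax.K2'[of a b]] circ[of a]
      by - (rule Km.derivable_prop_consequence[of "{_, _}"], blast, auto simp: modal_defs)
  next
    case (M3 b a)
    then show ?thesis using ax[OF Km_ax.M3'[of a b]] ax[OF Km_ax.DN2[of a]] circ'[of a]
      by - (rule Km.derivable_prop_consequence[of "{_, _, _}"], blast, auto simp: modal_defs)
  next
    case (M4 a b)
    then show ?thesis
      using ax[OF Km_ax.M4'[of b a]] ax[OF Km_ax.DN2[of b]] ax[OF Km_ax.M2[of b a]]
        circ[of "Imp a b"]
      by - (rule Km.derivable_prop_consequence[of "{_, _, _, _}"], blast, auto simp: modal_defs)
  next
    case (T a)
    then show ?thesis using circ'[of a]
      by - (rule Km.derivable_prop_consequence[of "{_}"], blast, auto simp: modal_defs)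
  qed (auto intro: ax Km_ax.intros)
qed

lemma Km_ax_derivable_Tm:
  assumes "Km_ax a"
  shows "derivable Tm_ax G a"
proof -
  have ax: "\<And>b. Tm_ax b \<Longrightarrow> derivable Tm_ax G b"
    by (rule derivable.ax)
  from assms show ?thesis
  proof cases
    case (K' a b)
    then show ?thesis using ax[OF Tm_ax.K[of a b]]
      by - (rule Tm.derivable_prop_consequence[of "{_}"], blast, auto simp: modal_defs)
  next
    case (K1' b a)
    then show ?thesis using ax[OF Tm_ax.K1[of a b]]
      by - (rule Tm.derivable_prop_consequence[of "{_}"], blast, auto simp: modal_defs)
  next
    case (K2' a b)
    then show ?thesis using ax[OF Tm_ax.K2[of a b]]
      by - (rule Tm.derivable_prop_consequence[of "{_}"], blast, auto simp: modal_defs)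
  next
    case (M3' a b)
    then show ?thesis using ax[OF Tm_ax.M3[of b a]]
      by - (rule Tm.derivable_prop_consequence[of "{_}"], blast, auto simp: modal_defs)
  next
    case (M4' b a)
    then show ?thesis using ax[OF Tm_ax.M4[of a b]]
      by - (rule Tm.derivable_prop_consequence[of "{_}"], blast, auto simp: modal_defs)
  next
    case (I1 a b)
    then show ?thesis using ax[OF Tm_ax.T[of a]] ax[OF Tm_ax.T[of "Neg a"]]
      by - (rule Tm.derivable_prop_consequence[of "{_, _}"], blast, auto simp: modal_defs)
  next
    case (I2 b a)
    then show ?thesis using ax[OF Tm_ax.T[of b]] ax[OF Tm_ax.T[of "Neg b"]]
      by - (rule Tm.derivable_prop_consequence[of "{_, _}"], blast, auto simp: modal_defs)
  qed (auto intro: ax Tm_ax.intros)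
qed

lemma derivable_Tm_circ: "derivable Tm_ax G (circ d)"
  and derivable_Tm_circ': "derivable Tm_ax G (circ' d)"
  using derivable.ax[of Tm_ax, OF Tm_ax.T[of d]] derivable.ax[of Tm_ax, OF Tm_ax.T[of "Neg d"]]
  by - (rule Tm.derivable_prop_consequence[of "{_, _}"], blast, auto simp: modal_defs)+

theorem mainTheorem9:
  fixes G :: "fm set" and phi :: fm
  assumes "finite G"
  shows "derivable Tm_ax G phi \<longleftrightarrow>
    (\<exists>U U' :: fm set. derivable Km_ax (G \<union> circ ` U \<union> circ' ` U') phi)"
proof
  assume "derivable Tm_ax G phi"
  then have "derivable Km_ax (G \<union> circ ` UNIV \<union> circ' ` UNIV) phi"
    by (rule derivable_transfer) (auto intro: derivable.prem Tm_ax_derivable_Km_circ)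
  then show "\<exists>U U'. derivable Km_ax (G \<union> circ ` U \<union> circ' ` U') phi"
    by blast
next
  assume "\<exists>U U'. derivable Km_ax (G \<union> circ ` U \<union> circ' ` U') phi"
  then obtain U U' where "derivable Km_ax (G \<union> circ ` U \<union> circ' ` U') phi"
    by blast
  then show "derivable Tm_ax G phi"
    by (rule derivable_transfer)
      (auto intro: derivable.prem Km_ax_derivable_Tm derivable_Tm_circ derivable_Tm_circ')
qed

end
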